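(* Suppose that $\kappa = \nu^+$, and $J$ is a $\kappa$-complete ideal on $\kappa$ such that $\clubsuit_\kappa^{{\rm cof},-}[J]$ holds. Then there exist $A^i_\delta \in P_\nu(\kappa\times\kappa)$ for $\delta<\kappa$ and $i<\nu$ such that for any $F : \kappa\to\kappa$, the set $\{\delta<\kappa : \exists i<\nu\,\exists Z\subseteq\delta\,(\sup Z = \delta \text{ and } F|Z \subseteq A^i_\delta)\}$ lies in $J^+$ (where $F|Z$ is identified with its graph $\{(\alpha, F(\alpha)) : \alpha \in Z\}$).
   Context: An ideal on $\kappa$ is a nonempty $J \subseteq P(\kappa)$ with $\kappa \notin J$, every bounded subset of $\kappa$ in $J$, $J$ closed under subsets and under unions of two members; $J^+ = P(\kappa)\setminus J$; $\kappa$-complete means closed under unions of fewer than $\kappa$ members. $P_\rho(X) = \{x\subseteq X : |x|<\rho\}$. $\clubsuit_\kappa^{{\rm cof},-}[J]$: there are $B^i_\delta \in P_{|\delta|}(\delta)$ for $i<\delta<\kappa$ such that for every $W\subseteq\kappa$ of size $\kappa$, $\{\delta<\kappa : \exists i<\delta\,(\sup(W\cap B^i_\delta)=\delta)\}\in J^+$. *)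

theory Defs
  imports Main
begin

unbundle cardinal_syntax

text \<open>Ordinals below kappa are modelled by the field of a well-order r which is a
cardinal order (an initial ordinal); alpha < delta means alpha in underS r delta.\<close>

definition ord_sup_eq :: "'a rel \<Rightarrow> 'a set \<Rightarrow> 'a \<Rightarrow> bool" where
  "ord_sup_eq r Z d \<longleftrightarrow> d \<in> Field r \<and> (\<forall>g\<in>Z. (g, d) \<in> r) \<and>
     (\<forall>b\<in>underS r d. \<exists>g\<in>Z. (b, g) \<in> r \<and> b \<noteq> g)"

definition is_ideal_on :: "'a rel \<Rightarrow> 'a set set \<Rightarrow> bool" where
  "is_ideal_on r J \<longleftrightarrow>
     J \<noteq> {} \<and> J \<subseteq> Pow (Field r) \<and> Field r \<notin> J \<and>
     (\<forall>X. X \<subseteq> Field r \<and> (\<exists>b\<in>Field r. X \<subseteq> underS r b) \<longrightarrow> X \<in> J) \<and>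
     (\<forall>X Y. X \<in> J \<and> Y \<subseteq> X \<longrightarrow> Y \<in> J) \<and>
     (\<forall>X Y. X \<in> J \<and> Y \<in> J \<longrightarrow> X \<union> Y \<in> J)"

definition complete_ideal :: "'a rel \<Rightarrow> 'a set set \<Rightarrow> bool" where
  "complete_ideal r J \<longleftrightarrow> (\<forall>\<X>. \<X> \<subseteq> J \<and> card_of \<X> <o r \<longrightarrow> \<Union>\<X> \<in> J)"

definition ideal_pos :: "'a rel \<Rightarrow> 'a set set \<Rightarrow> 'a set set" where
  "ideal_pos r J = Pow (Field r) - J"

definition clubsuit_cof_minus :: "'a rel \<Rightarrow> 'a set set \<Rightarrow> bool" where
  "clubsuit_cof_minus r J \<longleftrightarrow>
     (\<exists>B :: 'a \<Rightarrow> 'a \<Rightarrow> 'a set.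
        (\<forall>d\<in>Field r. \<forall>i\<in>underS r d.
            B d i \<subseteq> underS r d \<and> card_of (B d i) <o card_of (underS r d)) \<and>
        (\<forall>W. W \<subseteq> Field r \<and> card_of W =o r \<longrightarrow>
            {d \<in> Field r. \<exists>i\<in>underS r d. ord_sup_eq r (W \<inter> B d i) d} \<in> ideal_pos r J))"

end

theory Submission
  imports Defs
begin

text \<open>Fix a map \<open>c\<close> from \<open>\<kappa>\<close> onto \<open>\<kappa> \<times> \<kappa>\<close> all of whose fibres are unbounded in \<open>\<kappa>\<close>, and for
  \<open>\<delta> < \<kappa> = \<nu>\<^sup>+\<close> enumerate \<open>\<delta>\<close> as \<open>j(\<delta>, i)\<close>, \<open>i < \<nu>\<close>; let \<open>A\<^sup>i\<^sub>\<delta> = c[B\<^sup>j\<^sub>\<delta>]\<close> with \<open>j = j(\<delta>, i)\<close>.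
  Given \<open>F\<close>, regularity of \<open>\<kappa>\<close> and the unbounded fibres of \<open>c\<close> allow a recursion on \<open>\<xi> < \<kappa>\<close>
  producing points \<open>a(\<xi>) < w(\<xi>)\<close> with \<open>w(\<zeta>) \<le> a(\<xi>)\<close> for all \<open>\<zeta> < \<xi>\<close> and \<open>c(w(\<xi>)) = (a(\<xi>), F(a(\<xi>)))\<close>.
  Apply \<open>\<clubsuit>\<close> to \<open>W = ran w\<close>: if \<open>W \<inter> B\<^sup>j\<^sub>\<delta>\<close> is cofinal in \<open>\<delta>\<close>, then so is
  \<open>Z = {a(\<xi>) | w(\<xi>) \<in> B\<^sup>j\<^sub>\<delta>}\<close>, since the \<open>a\<close>'s interleave the \<open>w\<close>'s, and \<open>F|Z = c[W \<inter> B\<^sup>j\<^sub>\<delta>] \<subseteq> A\<^sup>i\<^sub>\<delta>\<close>.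
  So the \<open>J\<close>-positive set given by \<open>\<clubsuit>\<close> is contained in the set of the lemma.\<close>

lemma Card_order_Linear_order: "Card_order r \<Longrightarrow> Linear_order r"
  by (metis card_order_on_well_order_on well_order_on_def)

lemma under_underS_trans:
  "trans r \<Longrightarrow> antisym r \<Longrightarrow> (a, b) \<in> r \<Longrightarrow> b \<in> underS r c \<Longrightarrow> a \<in> underS r c"
  unfolding underS_def by (blast dest: transD antisymD)

lemma underS_trans:
  "trans r \<Longrightarrow> antisym r \<Longrightarrow> a \<in> underS r b \<Longrightarrow> b \<in> underS r c \<Longrightarrow> a \<in> underS r c"
  unfolding underS_def by (blast dest: transD antisymD)

lemma underS_under_trans:
  "trans r \<Longrightarrow> antisym r \<Longrightarrow> a \<in> underS r b \<Longrightarrow> (b, c) \<in> r \<Longrightarrow> a \<in> underS r c"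
  unfolding underS_def by (blast dest: transD antisymD)

lemma Linear_order_le_or_underS:
  "Linear_order r \<Longrightarrow> a \<in> Field r \<Longrightarrow> b \<in> Field r \<Longrightarrow> (a, b) \<in> r \<or> b \<in> underS r a"
  using Linear_order_in_diff_Id unfolding underS_def by fastforce

lemma Linear_order_finite_has_greatest:
  assumes "Linear_order r" and "finite X" and "X \<noteq> {}" and "X \<subseteq> Field r"
  shows "\<exists>m\<in>X. \<forall>x\<in>X. (x, m) \<in> r"
  using assms(2-4)
proof (induction X rule: finite_ne_induct)
  case (singleton x)
  have "Refl r" using assms(1) by (simp add: order_on_defs)
  then show ?case using singleton by (simp add: refl_onD)
next
  case (insert x X)
  then obtain m where m: "m \<in> X" "\<forall>y\<in>X. (y, m) \<in> r" by blast
  have "x \<in> Field r" "m \<in> Field r" using insert.prems m(1) by auto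
  then consider "(x, m) \<in> r" | "m \<in> underS r x"
    using Linear_order_le_or_underS[OF assms(1)] by blast
  then show ?case
  proof cases
    case 1
    then show ?thesis using m by blast
  next
    case 2
    have "Refl r" "trans r" using assms(1) by (simp_all add: order_on_defs)
    then have "(x, x) \<in> r" using \<open>x \<in> Field r\<close> by (simp add: refl_onD)
    then show ?thesis using m 2 \<open>trans r\<close> unfolding underS_def by (blast dest: transD)
  qed
qed

lemma ord_sup_eq_infinite:
  assumes "Linear_order r" and "ord_sup_eq r Z d" and "Z \<subseteq> underS r d" and "underS r d \<noteq> {}"
  shows "infinite Z"
proof
  assume "finite Z"
  obtain b where "b \<in> underS r d" using assms(4) by blast
  then have "Z \<noteq> {}" using assms(2) unfolding ord_sup_eq_def by blast
  moreover have "Z \<subseteq> Field r" using assms(3) Order_Relation.underS_Field by (rule subset_trans)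
  ultimately obtain m where m: "m \<in> Z" "\<forall>z\<in>Z. (z, m) \<in> r"
    using Linear_order_finite_has_greatest[OF assms(1) \<open>finite Z\<close>] by blast
  then have "m \<in> underS r d" using assms(3) by blast
  then obtain g where g: "g \<in> Z" "(m, g) \<in> r" "m \<noteq> g"
    using assms(2) unfolding ord_sup_eq_def by blast
  have "antisym r" using assms(1) by (simp add: order_on_defs)
  then show False using g m(2) antisymD by metis
qed

lemma ideal_pos_nonempty: "is_ideal_on r J \<Longrightarrow> S \<in> ideal_pos r J \<Longrightarrow> S \<noteq> {}"
  unfolding is_ideal_on_def ideal_pos_def by blast

lemma ideal_pos_mono:
  assumes "is_ideal_on r J" and "S \<in> ideal_pos r J" and "S \<subseteq> T" and "T \<subseteq> Field r"
  shows "T \<in> ideal_pos r J"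
  using assms unfolding is_ideal_on_def ideal_pos_def by blast

lemma clubsuit_cof_minus_infinite:
  assumes "Card_order r" and "is_ideal_on r J" and "clubsuit_cof_minus r J"
  shows "infinite (Field r)"
proof -
  obtain B where B_sub: "\<forall>d\<in>Field r. \<forall>i\<in>underS r d. B d i \<subseteq> underS r d"
    and B_guess: "\<forall>W. W \<subseteq> Field r \<and> |W| =o r \<longrightarrow>
      {d \<in> Field r. \<exists>i\<in>underS r d. ord_sup_eq r (W \<inter> B d i) d} \<in> ideal_pos r J"
    using assms(3) unfolding clubsuit_cof_minus_def by blast
  have "{d \<in> Field r. \<exists>i\<in>underS r d. ord_sup_eq r (Field r \<inter> B d i) d} \<in> ideal_pos r J"
    using B_guess card_of_Field_ordIso[OF assms(1)] by simp
  then have "{d \<in> Field r. \<exists>i\<in>underS r d. ord_sup_eq r (Field r \<inter> B d i) d} \<noteq> {}"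
    using ideal_pos_nonempty[OF assms(2)] by blast
  then obtain d i where d: "d \<in> Field r" and i: "i \<in> underS r d"
    and sup: "ord_sup_eq r (Field r \<inter> B d i) d" by blast
  have "Field r \<inter> B d i \<subseteq> underS r d" using B_sub d i by blast
  then have "infinite (Field r \<inter> B d i)"
    using ord_sup_eq_infinite[OF Card_order_Linear_order[OF assms(1)] sup] i by blast
  then show ?thesis by (meson finite_Int)
qed

lemma card_of_under_ordLess:
  assumes "Card_order r" and "infinite (Field r)" and "a \<in> Field r"
  shows "|under r a| <o r"
proof -
  obtain b where b: "b \<in> Field r" "a \<in> underS r b"
    using infinite_Card_order_limit[OF assms] by (auto simp: underS_def)
  have "trans r" "antisym r" using Card_order_Linear_order[OF assms(1)] by (simp_all add: order_on_defs)
  then have "under r a \<subseteq> underS r b"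
    using b(2) under_underS_trans unfolding under_def by fast
  then show ?thesis using card_of_mono1 card_of_underS[OF assms(1) b(1)] ordLeq_ordLess_trans by blast
qed

lemma Card_order_map_with_unbounded_fibres:
  assumes "Card_order r" and "infinite (Field r)" and "X \<noteq> {}" and "|X| \<le>o r"
  shows "\<exists>c. c ` Field r \<subseteq> X \<and> (\<forall>x\<in>X. \<forall>a\<in>Field r. \<exists>\<gamma>\<in>Field r. a \<in> underS r \<gamma> \<and> c \<gamma> = x)"
proof -
  have r_card: "|Field r| =o r" using card_of_Field_ordIso[OF assms(1)] .
  have "|X| \<le>o |Field r|" using assms(4) ordLeq_ordIso_trans ordIso_symmetric[OF r_card] by blast
  then have "|Field r \<times> X| \<le>o |Field r|"
    using card_of_Times_infinite[OF assms(2,3)] ordIso_iff_ordLeq by blast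
  then obtain g where g: "g ` Field r = Field r \<times> X"
    using card_of_ordLeq2[of "Field r \<times> X" "Field r"] assms(2,3) by fastforce
  have "\<exists>\<gamma>\<in>Field r. a \<in> underS r \<gamma> \<and> snd (g \<gamma>) = x" if x: "x \<in> X" and a: "a \<in> Field r" for x a
  proof (rule ccontr)
    assume none: "\<not> ?thesis"
    have covered: "Field r \<times> {x} \<subseteq> g ` under r a"
    proof
      fix y assume y: "y \<in> Field r \<times> {x}"
      then have "y \<in> g ` Field r" using g x by auto
      then obtain \<gamma> where \<gamma>: "\<gamma> \<in> Field r" "g \<gamma> = y" by blast
      then have "snd (g \<gamma>) = x" using y by auto
      then have "a \<notin> underS r \<gamma>" using none \<gamma>(1) by blast
      then have "(\<gamma>, a) \<in> r"
        using Linear_order_le_or_underS[OF Card_order_Linear_order[OF assms(1)] \<gamma>(1) a] by blast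
      then show "y \<in> g ` under r a" using \<gamma>(2) unfolding under_def by blast
    qed
    have "|Field r| \<le>o |Field r \<times> {x}|" by (rule card_of_Times1) simp
    also have "|Field r \<times> {x}| \<le>o |g ` under r a|" using covered by (rule card_of_mono1)
    also have "|g ` under r a| \<le>o |under r a|" by (rule card_of_image)
    also have "|under r a| <o r" by (rule card_of_under_ordLess[OF assms(1,2) a])
    finally have "|Field r| <o r" .
    then show False using r_card not_ordLess_ordIso by blast
  qed
  moreover have "(snd \<circ> g) ` Field r \<subseteq> X" unfolding image_comp[symmetric] g by auto
  ultimately show ?thesis by (intro exI[of _ "snd \<circ> g"]) auto
qed

lemma regularCard_bounded:
  assumes "Card_order r" and "regularCard r" and "K \<subseteq> Field r" and "|K| <o r"
  shows "\<exists>a\<in>Field r. \<forall>k\<in>K. (k, a) \<in> r"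
proof -
  have "Refl r" "trans r" using Card_order_Linear_order[OF assms(1)] by (simp_all add: order_on_defs)
  then have "relChain r (under r)" unfolding relChain_def by (intro allI impI under_incr[OF \<open>trans r\<close>])
  moreover have "K \<subseteq> (\<Union>a\<in>Field r. under r a)" using assms(3) by (blast intro: Refl_under_in[OF \<open>Refl r\<close>])
  ultimately obtain a where "a \<in> Field r" "K \<subseteq> under r a"
    using regularCard_UNION[OF assms(1,2) _ _ assms(4)] by blast
  then show ?thesis unfolding under_def by blast
qed

lemma ordIso_cardSuc_Cinfinite:
  assumes "Card_order r" and "Card_order nu" and "r =o cardSuc nu" and "infinite (Field r)"
  shows "Cinfinite nu"
proof -
  have "|Field r| =o |Field (cardSuc nu)|"
    using card_of_Field_ordIso[OF assms(1)] card_of_Field_ordIso[OF cardSuc_Card_order[OF assms(2)]]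
      assms(3) ordIso_symmetric ordIso_transitive by metis
  then have "infinite (Field (cardSuc nu))" using assms(4) card_of_ordIso_finite by blast
  then show ?thesis using assms(2) cardSuc_finite[OF assms(2)] by (simp add: cinfinite_def)
qed

lemma ordIso_cardSuc_regularCard:
  assumes "Card_order r" and "Card_order nu" and "r =o cardSuc nu" and "infinite (Field r)"
  shows "regularCard r"
  using ordIso_cardSuc_Cinfinite[OF assms] regularCard_ordIso[OF ordIso_symmetric[OF assms(3)]]
    Cinfinite_cardSuc regularCard_cardSuc by blast

lemma ordIso_cardSuc_card_of_underS:
  assumes "Card_order r" and "Card_order nu" and "r =o cardSuc nu" and "d \<in> Field r"
  shows "|underS r d| \<le>o |Field nu|"
proof -
  have "|underS r d| <o cardSuc nu" using card_of_underS[OF assms(1,4)] assms(3) by (rule ordLess_ordIso_trans)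
  then have "|underS r d| \<le>o nu" using cardSuc_ordLeq_ordLess[OF assms(2) card_of_Card_order] by blast
  then show ?thesis using card_of_Field_ordIso[OF assms(2)] ordIso_symmetric ordLeq_ordIso_trans by blast
qed

definition interleaved :: "'a rel \<Rightarrow> ('a \<Rightarrow> 'a) \<Rightarrow> ('a \<Rightarrow> 'a) \<Rightarrow> bool" where
  "interleaved r a w \<longleftrightarrow>
     (\<forall>\<xi>\<in>Field r. a \<xi> \<in> underS r (w \<xi>) \<and> (\<forall>\<zeta>\<in>underS r \<xi>. (w \<zeta>, a \<xi>) \<in> r))"

lemma interleaved_underS:
  assumes "Linear_order r" and "interleaved r a w" and "\<xi> \<in> Field r" and "\<zeta> \<in> underS r \<xi>"
  shows "w \<zeta> \<in> underS r (w \<xi>)"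
proof -
  have "trans r" "antisym r" using assms(1) by (simp_all add: order_on_defs)
  moreover have "(w \<zeta>, a \<xi>) \<in> r" "a \<xi> \<in> underS r (w \<xi>)"
    using assms(2-4) unfolding interleaved_def by blast+
  ultimately show ?thesis by (rule under_underS_trans)
qed

lemma interleaved_underS_iff:
  assumes "Linear_order r" and "interleaved r a w" and "\<xi> \<in> Field r" and "\<zeta> \<in> Field r"
  shows "w \<zeta> \<in> underS r (w \<xi>) \<longleftrightarrow> \<zeta> \<in> underS r \<xi>"
proof
  assume w_less: "w \<zeta> \<in> underS r (w \<xi>)"
  show "\<zeta> \<in> underS r \<xi>"
  proof (rule ccontr)
    assume "\<zeta> \<notin> underS r \<xi>"
    then have "(\<xi>, \<zeta>) \<in> r" using Linear_order_le_or_underS[OF assms(1,3,4)] by blast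
    then consider "\<xi> = \<zeta>" | "\<xi> \<in> underS r \<zeta>" unfolding underS_def by blast
    then show False
    proof cases
      case 1
      then show False using w_less underS_notIn by metis
    next
      case 2
      have "antisym r" using assms(1) by (simp add: order_on_defs)
      moreover have "w \<xi> \<in> underS r (w \<zeta>)" using interleaved_underS[OF assms(1,2,4) 2] .
      ultimately show False using w_less unfolding underS_def by (blast dest: antisymD)
    qed
  qed
qed (rule interleaved_underS[OF assms(1-3)])

lemma interleaved_inj_on:
  assumes "Linear_order r" and "interleaved r a w"
  shows "inj_on w (Field r)"
proof (rule inj_onI)
  fix \<xi> \<zeta> assume \<xi>: "\<xi> \<in> Field r" and \<zeta>: "\<zeta> \<in> Field r" and eq: "w \<xi> = w \<zeta>"
  have "w \<zeta> \<notin> underS r (w \<xi>)" "w \<xi> \<notin> underS r (w \<zeta>)" using eq underS_notIn by metis+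
  then have "\<zeta> \<notin> underS r \<xi>" "\<xi> \<notin> underS r \<zeta>"
    using interleaved_underS_iff[OF assms] \<xi> \<zeta> by blast+
  then show "\<xi> = \<zeta>"
    using Linear_order_le_or_underS[OF assms(1)] \<xi> \<zeta> unfolding underS_def by blast
qed

lemma interleaved_image_subset: "interleaved r a w \<Longrightarrow> w ` Field r \<subseteq> Field r"
  unfolding interleaved_def underS_def by (blast intro: FieldI2)

lemma interleaved_card_of_image:
  assumes "Card_order r" and "interleaved r a w"
  shows "|w ` Field r| =o r"
proof -
  have "bij_betw w (Field r) (w ` Field r)"
    using interleaved_inj_on[OF Card_order_Linear_order[OF assms(1)] assms(2)] by (simp add: bij_betw_def)
  then have "|Field r| =o |w ` Field r|" using card_of_ordIso by blast
  then show ?thesis using card_of_Field_ordIso[OF assms(1)] ordIso_symmetric ordIso_transitive by blast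
qed

lemma interleaved_image_underS:
  assumes "Linear_order r" and "interleaved r a w" and "X \<subseteq> Field r" and "w ` X \<subseteq> underS r d"
  shows "a ` X \<subseteq> underS r d"
proof
  fix z assume "z \<in> a ` X"
  then obtain \<xi> where \<xi>: "\<xi> \<in> X" "z = a \<xi>" by blast
  have "trans r" "antisym r" using assms(1) by (simp_all add: order_on_defs)
  moreover have "a \<xi> \<in> underS r (w \<xi>)" using assms(2,3) \<xi>(1) unfolding interleaved_def by blast
  moreover have "w \<xi> \<in> underS r d" using assms(4) \<xi>(1) by blast
  ultimately show "z \<in> underS r d" unfolding \<xi>(2) by (rule underS_trans)
qed

lemma interleaved_ord_sup_eq:
  assumes "Linear_order r" and "interleaved r a w" and "X \<subseteq> Field r"
    and "w ` X \<subseteq> underS r d" and "ord_sup_eq r (w ` X) d"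
  shows "ord_sup_eq r (a ` X) d"
proof -
  have "trans r" "antisym r" using assms(1) by (simp_all add: order_on_defs)
  have below: "(z, d) \<in> r" if "z \<in> a ` X" for z
    using interleaved_image_underS[OF assms(1-4)] that unfolding underS_def by blast
  have cofinal: "\<exists>g\<in>a ` X. (b, g) \<in> r \<and> b \<noteq> g" if b: "b \<in> underS r d" for b
  proof -
    obtain \<xi> where \<xi>: "\<xi> \<in> X" "b \<in> underS r (w \<xi>)"
      using assms(5) b unfolding ord_sup_eq_def underS_def by blast
    then have "w \<xi> \<in> underS r d" using assms(4) by blast
    then obtain \<zeta> where \<zeta>: "\<zeta> \<in> X" "w \<xi> \<in> underS r (w \<zeta>)"
      using assms(5) unfolding ord_sup_eq_def underS_def by blast
    then have "\<xi> \<in> underS r \<zeta>"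
      using interleaved_underS_iff[OF assms(1,2)] \<xi>(1) assms(3) by blast
    then have "(w \<xi>, a \<zeta>) \<in> r" using assms(2,3) \<zeta>(1) unfolding interleaved_def by blast
    then have "b \<in> underS r (a \<zeta>)"
      using underS_under_trans[OF \<open>trans r\<close> \<open>antisym r\<close> \<xi>(2)] by blast
    then show ?thesis using \<zeta>(1) unfolding underS_def by blast
  qed
  show ?thesis using assms(5) below cofinal unfolding ord_sup_eq_def by blast
qed

lemma regularCard_interleaved_exists:
  assumes "Card_order r" and "regularCard r"
    and "\<forall>x\<in>Field r. \<exists>\<gamma>\<in>Field r. x \<in> underS r \<gamma> \<and> Q x \<gamma>"
  shows "\<exists>a w. interleaved r a w \<and> (\<forall>\<xi>\<in>Field r. Q (a \<xi>) (w \<xi>))"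
proof -
  obtain ub where ub: "\<And>K. K \<subseteq> Field r \<Longrightarrow> |K| <o r \<Longrightarrow> ub K \<in> Field r \<and> (\<forall>k\<in>K. (k, ub K) \<in> r)"
    using regularCard_bounded[OF assms(1,2)] by metis
  obtain code where code: "\<And>x. x \<in> Field r \<Longrightarrow> code x \<in> Field r \<and> x \<in> underS r (code x) \<and> Q x (code x)"
    using assms(3) by metis
  have wo: "wo_rel r" using card_order_on_well_order_on[OF assms(1)] by (simp add: wo_rel_def)
  \<comment> \<open>Intersecting with \<open>Field r\<close> makes \<open>ub\<close> applicable before we know that \<open>w\<close> maps into \<open>Field r\<close>.\<close>
  define H where "H f \<xi> = code (ub (f ` underS r \<xi> \<inter> Field r))" for f :: "'a \<Rightarrow> 'a" and \<xi>
  define w where "w = wo_rel.worec r H"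
  define a where "a \<xi> = ub (w ` underS r \<xi> \<inter> Field r)" for \<xi>
  have "wo_rel.adm_wo r H"
    unfolding wo_rel.adm_wo_def[OF wo] H_def by (metis image_cong)
  then have "w = H w" unfolding w_def by (rule wo_rel.worec_fixpoint[OF wo])
  then have w_code: "w \<xi> = code (a \<xi>)" for \<xi> unfolding a_def H_def by metis
  have a_ub: "a \<xi> \<in> Field r \<and> (\<forall>k\<in>w ` underS r \<xi> \<inter> Field r. (k, a \<xi>) \<in> r)"
    if "\<xi> \<in> Field r" for \<xi>
  proof -
    have "|w ` underS r \<xi> \<inter> Field r| \<le>o |underS r \<xi>|"
      using card_of_mono1[OF Int_lower1] card_of_image ordLeq_transitive by blast
    then have "|w ` underS r \<xi> \<inter> Field r| <o r"
      using card_of_underS[OF assms(1) that] ordLeq_ordLess_trans by blast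
    then show ?thesis unfolding a_def by (intro ub) auto
  qed
  have a_w: "a \<xi> \<in> Field r \<and> w \<xi> \<in> Field r \<and> a \<xi> \<in> underS r (w \<xi>) \<and> Q (a \<xi>) (w \<xi>)"
    if "\<xi> \<in> Field r" for \<xi>
    using a_ub[OF that] code w_code by metis
  have "interleaved r a w"
    unfolding interleaved_def
  proof (intro ballI conjI)
    fix \<xi> assume \<xi>: "\<xi> \<in> Field r"
    show "a \<xi> \<in> underS r (w \<xi>)" using a_w[OF \<xi>] by blast
    fix \<zeta> assume \<zeta>: "\<zeta> \<in> underS r \<xi>"
    then have "\<zeta> \<in> Field r" by (rule subsetD[OF Order_Relation.underS_Field])
    then have "w \<zeta> \<in> w ` underS r \<xi> \<inter> Field r" using a_w \<zeta> by blast
    then show "(w \<zeta>, a \<xi>) \<in> r" using a_ub[OF \<xi>] by blast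
  qed
  then show ?thesis using a_w by blast
qed

definition enum_underS :: "'a rel \<Rightarrow> 'b rel \<Rightarrow> 'a \<Rightarrow> 'b \<Rightarrow> 'a" where
  "enum_underS r nu d = (SOME e. e ` Field nu = underS r d)"

lemma enum_underS_image:
  assumes "Card_order r" and "Card_order nu" and "r =o cardSuc nu"
    and "d \<in> Field r" and "underS r d \<noteq> {}"
  shows "enum_underS r nu d ` Field nu = underS r d"
proof -
  have "\<exists>e. e ` Field nu = underS r d"
    using card_of_ordLeq2[OF assms(5)] ordIso_cardSuc_card_of_underS[OF assms(1-4)] by blast
  then show ?thesis unfolding enum_underS_def by (rule someI_ex)
qed

text \<open>\<open>guessing_sets r nu B c d i\<close> is \<open>A\<^sup>i\<^sub>\<delta>\<close>; the test only fails for the least \<open>\<delta>\<close>, where the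
  enumeration of the empty set \<open>\<delta>\<close> is a junk value.\<close>
definition guessing_sets ::
    "'a rel \<Rightarrow> 'b rel \<Rightarrow> ('a \<Rightarrow> 'a \<Rightarrow> 'a set) \<Rightarrow> ('a \<Rightarrow> 'a \<times> 'a) \<Rightarrow> 'a \<Rightarrow> 'b \<Rightarrow> ('a \<times> 'a) set" where
  "guessing_sets r nu B c d i =
     (if enum_underS r nu d i \<in> underS r d then c ` B d (enum_underS r nu d i) else {})"

lemma guessing_sets_small:
  assumes "Card_order r" and "Card_order nu" and "r =o cardSuc nu" and "Cinfinite nu"
    and "c ` Field r \<subseteq> Field r \<times> Field r"
    and "\<forall>d\<in>Field r. \<forall>j\<in>underS r d. B d j \<subseteq> underS r d \<and> |B d j| <o |underS r d|"
    and "d \<in> Field r"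
  shows "guessing_sets r nu B c d i \<subseteq> Field r \<times> Field r \<and> |guessing_sets r nu B c d i| <o nu"
proof (cases "enum_underS r nu d i \<in> underS r d")
  case True
  let ?j = "enum_underS r nu d i"
  have B: "B d ?j \<subseteq> underS r d" "|B d ?j| <o |underS r d|" using assms(6,7) True by blast+
  have "B d ?j \<subseteq> Field r" using B(1) Order_Relation.underS_Field by (rule subset_trans)
  then have "c ` B d ?j \<subseteq> Field r \<times> Field r" using assms(5) by blast
  moreover have "|c ` B d ?j| <o nu"
  proof -
    have "|c ` B d ?j| \<le>o |B d ?j|" by (rule card_of_image)
    also have "|B d ?j| <o |underS r d|" by (rule B(2))
    also have "|underS r d| \<le>o |Field nu|" by (rule ordIso_cardSuc_card_of_underS[OF assms(1-3,7)])
    also have "|Field nu| =o nu" by (rule card_of_Field_ordIso[OF assms(2)])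
    finally show ?thesis .
  qed
  ultimately show ?thesis using True unfolding guessing_sets_def by simp
next
  case False
  then show ?thesis using Cinfinite_gt_empty[OF assms(4)] unfolding guessing_sets_def by simp
qed

lemma guessing_sets_catch:
  assumes "Card_order r" and "Card_order nu" and "r =o cardSuc nu"
    and "\<forall>d\<in>Field r. \<forall>j\<in>underS r d. B d j \<subseteq> underS r d"
    and "interleaved r a w" and "\<forall>\<xi>\<in>Field r. c (w \<xi>) = (a \<xi>, F (a \<xi>))"
    and "d \<in> Field r" and "j \<in> underS r d" and "ord_sup_eq r (w ` Field r \<inter> B d j) d"
  shows "\<exists>i\<in>Field nu. \<exists>Z. Z \<subseteq> underS r d \<and> ord_sup_eq r Z d \<and>
           (\<lambda>x. (x, F x)) ` Z \<subseteq> guessing_sets r nu B c d i"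
proof -
  have "j \<in> enum_underS r nu d ` Field nu" using enum_underS_image[OF assms(1-3,7)] assms(8) by blast
  then obtain i where i: "i \<in> Field nu" "enum_underS r nu d i = j" by blast
  define X where "X = {\<xi> \<in> Field r. w \<xi> \<in> B d j}"
  have X: "X \<subseteq> Field r" and wX: "w ` X = w ` Field r \<inter> B d j" unfolding X_def by blast+
  have wX_below: "w ` X \<subseteq> underS r d" using wX assms(4,7,8) by blast
  note lin = Card_order_Linear_order[OF assms(1)]
  have "a ` X \<subseteq> underS r d" by (rule interleaved_image_underS[OF lin assms(5) X wX_below])
  moreover have "ord_sup_eq r (a ` X) d"
    using interleaved_ord_sup_eq[OF lin assms(5) X wX_below] assms(9) wX by simp
  moreover have "(\<lambda>x. (x, F x)) ` a ` X \<subseteq> c ` B d j"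
  proof
    fix p assume "p \<in> (\<lambda>x. (x, F x)) ` a ` X"
    then obtain \<xi> where "\<xi> \<in> X" "p = (a \<xi>, F (a \<xi>))" by blast
    then have "p = c (w \<xi>)" "w \<xi> \<in> B d j" using assms(6) X unfolding X_def by auto
    then show "p \<in> c ` B d j" by blast
  qed
  then have "(\<lambda>x. (x, F x)) ` a ` X \<subseteq> guessing_sets r nu B c d i"
    using i(2) assms(8) unfolding guessing_sets_def by simp
  ultimately show ?thesis using i(1) by blast
qed

lemma guessing_sets_positive:
  assumes "Card_order r" and "Card_order nu" and "r =o cardSuc nu"
    and "is_ideal_on r J" and "regularCard r"
    and B_sub: "\<forall>d\<in>Field r. \<forall>j\<in>underS r d. B d j \<subseteq> underS r d"
    and B_guess: "\<forall>W. W \<subseteq> Field r \<and> |W| =o r \<longrightarrow>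
      {d \<in> Field r. \<exists>j\<in>underS r d. ord_sup_eq r (W \<inter> B d j) d} \<in> ideal_pos r J"
    and c_fibres: "\<forall>p\<in>Field r \<times> Field r. \<forall>x\<in>Field r. \<exists>\<gamma>\<in>Field r. x \<in> underS r \<gamma> \<and> c \<gamma> = p"
    and "F ` Field r \<subseteq> Field r"
  shows "{d \<in> Field r. \<exists>i\<in>Field nu. \<exists>Z. Z \<subseteq> underS r d \<and> ord_sup_eq r Z d \<and>
           (\<lambda>x. (x, F x)) ` Z \<subseteq> guessing_sets r nu B c d i} \<in> ideal_pos r J"
    (is "?T \<in> _")
proof -
  have "\<forall>x\<in>Field r. \<exists>\<gamma>\<in>Field r. x \<in> underS r \<gamma> \<and> c \<gamma> = (x, F x)"
    using c_fibres assms(9) by (simp add: image_subset_iff)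
  then obtain a w where aw: "interleaved r a w" "\<forall>\<xi>\<in>Field r. c (w \<xi>) = (a \<xi>, F (a \<xi>))"
    using regularCard_interleaved_exists[OF assms(1,5), of "\<lambda>x \<gamma>. c \<gamma> = (x, F x)"] by blast
  let ?S = "{d \<in> Field r. \<exists>j\<in>underS r d. ord_sup_eq r (w ` Field r \<inter> B d j) d}"
  have "?S \<in> ideal_pos r J"
    using B_guess interleaved_image_subset[OF aw(1)] interleaved_card_of_image[OF assms(1) aw(1)]
    by simp
  moreover have "?S \<subseteq> ?T"
  proof
    fix d assume "d \<in> ?S"
    then obtain j where "d \<in> Field r" "j \<in> underS r d" "ord_sup_eq r (w ` Field r \<inter> B d j) d"
      by blast
    from guessing_sets_catch[OF assms(1-3) B_sub aw this] show "d \<in> ?T" using \<open>d \<in> Field r\<close> by blast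
  qed
  ultimately show ?thesis using ideal_pos_mono[OF assms(4)] by blast
qed

theorem lemma3p8:
  fixes r :: "'a rel" and nu :: "'b rel" and J :: "'a set set"
  assumes "Card_order r" and "Card_order nu" and "r =o cardSuc nu"
    and "is_ideal_on r J" and "complete_ideal r J"
    and "clubsuit_cof_minus r J"
  shows "\<exists>A :: 'a \<Rightarrow> 'b \<Rightarrow> ('a \<times> 'a) set.
     (\<forall>d\<in>Field r. \<forall>i\<in>Field nu.
        A d i \<subseteq> Field r \<times> Field r \<and> card_of (A d i) <o nu) \<and>
     (\<forall>F :: 'a \<Rightarrow> 'a. F ` Field r \<subseteq> Field r \<longrightarrow>
        {d \<in> Field r. \<exists>i\<in>Field nu. \<exists>Z. Z \<subseteq> underS r d \<and> ord_sup_eq r Z d \<and>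
            (\<lambda>a. (a, F a)) ` Z \<subseteq> A d i} \<in> ideal_pos r J)"
proof -
  obtain B where B_small: "\<forall>d\<in>Field r. \<forall>j\<in>underS r d. B d j \<subseteq> underS r d \<and> |B d j| <o |underS r d|"
    and B_guess: "\<forall>W. W \<subseteq> Field r \<and> |W| =o r \<longrightarrow>
      {d \<in> Field r. \<exists>j\<in>underS r d. ord_sup_eq r (W \<inter> B d j) d} \<in> ideal_pos r J"
    using assms(6) unfolding clubsuit_cof_minus_def by blast
  have B_sub: "\<forall>d\<in>Field r. \<forall>j\<in>underS r d. B d j \<subseteq> underS r d" using B_small by blast
  have inf: "infinite (Field r)" by (rule clubsuit_cof_minus_infinite[OF assms(1,4,6)])
  have prod_le: "|Field r \<times> Field r| \<le>o r"
    using ordIso_transitive[OF card_of_Times_same_infinite[OF inf] card_of_Field_ordIso[OF assms(1)]]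
    by (rule ordIso_imp_ordLeq)
  have prod_ne: "Field r \<times> Field r \<noteq> {}" using inf by auto
  obtain c where c_into: "c ` Field r \<subseteq> Field r \<times> Field r"
    and c_fibres: "\<forall>p\<in>Field r \<times> Field r. \<forall>x\<in>Field r. \<exists>\<gamma>\<in>Field r. x \<in> underS r \<gamma> \<and> c \<gamma> = p"
    using Card_order_map_with_unbounded_fibres[OF assms(1) inf prod_ne prod_le] by blast
  note small = guessing_sets_small[OF assms(1-3) ordIso_cardSuc_Cinfinite[OF assms(1-3) inf] c_into B_small]
  note positive = guessing_sets_positive[OF assms(1-4) ordIso_cardSuc_regularCard[OF assms(1-3) inf]
      B_sub B_guess c_fibres]
  show ?thesis
    using small positive by (intro exI[of _ "guessing_sets r nu B c"] conjI ballI allI impI) blast+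
qed

end
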